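(* Let $n\ge 3$ and $k\ge 1$ be integers, $a=nk+1$, $S=\{a\}\cup[2a-n,\,2a-2]$ and $G=\langle S\rangle$. For $i\in[0,k-1]$ let $A_{i,k}=\{(2i+1)a\}\cup[(2i+2)a-(i+1)n,\,(2i+2)a-2]$ and $B_{i,k}=\{(2i+2)a\}\cup[(2i+3)a-(i+1)n,\,(2i+3)a-2]$, and let $H=\{0\}\cup\bigcup_{i=0}^{k-1}(A_{i,k}\cup B_{i,k})\cup[2ka,\infty[$. Then: (1) $H$ is a numerical semigroup; (2) $G=H$; (3) $H$ is an $n$-permutation numerical semigroup.
   Context: $\mathbb{N}=\{0,1,2,\dots\}$. A numerical semigroup is a submonoid $G$ of $(\mathbb{N},+,0)$ with $\mathbb{N}\setminus G$ finite; $\langle S\rangle$ is the submonoid generated by $S$. Writing the elements of a numerical semigroup as $0=g_0<g_1<g_2<\cdots$, it is an $n$-permutation numerical semigroup if it is generated by $\{g_1,\dots,g_n\}$ and for every $m\in\mathbb{N}$ the tuple $(g_{mn+1}\bmod n,\dots,g_{mn+n}\bmod n)$ contains exactly one representative of each residue class of $\mathbb{Z}/n\mathbb{Z}$. Notation: $[u,v]=\{x\in\mathbb{N}:u\le x\le v\}$, $[u,\infty[=\{x\in\mathbb{N}:x\ge u\}$. *)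

theory Defs
  imports Main "HOL-Library.Infinite_Set"
begin

definition submonoid :: "nat set \<Rightarrow> bool" where
  "submonoid G \<longleftrightarrow> 0 \<in> G \<and> (\<forall>x\<in>G. \<forall>y\<in>G. x + y \<in> G)"

definition numerical_semigroup :: "nat set \<Rightarrow> bool" where
  "numerical_semigroup G \<longleftrightarrow> submonoid G \<and> finite (UNIV - G)"

definition gen :: "nat set \<Rightarrow> nat set" where
  "gen S = \<Inter>{M. submonoid M \<and> S \<subseteq> M}"

text \<open>Elements g_0 < g_1 < ... of G, i.e. g_i = enumerate G i.\<close>
definition n_permutation_ns :: "nat \<Rightarrow> nat set \<Rightarrow> bool" where
  "n_permutation_ns n G \<longleftrightarrow> numerical_semigroup G
     \<and> G = gen (enumerate G ` {1..n})
     \<and> (\<forall>m::nat. bij_betw (\<lambda>j. enumerate G (m * n + j) mod n) {1..n} {0..<n})"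

definition Aset :: "nat \<Rightarrow> nat \<Rightarrow> nat \<Rightarrow> nat set" where
  "Aset n k i = (let a = n * k + 1 in
     {(2*i+1) * a} \<union> {(2*i+2) * a - (i+1) * n .. (2*i+2) * a - 2})"

definition Bset :: "nat \<Rightarrow> nat \<Rightarrow> nat \<Rightarrow> nat set" where
  "Bset n k i = (let a = n * k + 1 in
     {(2*i+2) * a} \<union> {(2*i+3) * a - (i+1) * n .. (2*i+3) * a - 2})"

definition Hset :: "nat \<Rightarrow> nat \<Rightarrow> nat set" where
  "Hset n k = {0} \<union> (\<Union>i\<in>{0..k-1}. Aset n k i \<union> Bset n k i) \<union> {2 * k * (n * k + 1)..}"

end

theory Submission
  imports Defs
begin

text \<open>Write \<open>x = q a + r\<close> with \<open>r < a\<close>. Below \<open>2ka\<close>, the elements of \<open>H\<close> in the level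
  \<open>[qa, (q+1)a[\<close> (\<open>q \<ge> 1\<close>) are \<open>qa\<close> and a block of consecutive integers ending at
  \<open>(q+1)a - 2\<close>, of length \<open>\<lceil>q/2\<rceil> n - 1\<close>. Two blocks add up, with a carry, into the block of level
  \<open>q\<^sub>1 + q\<^sub>2 + 1\<close>, which is wide enough since \<open>\<lceil>q\<^sub>1/2\<rceil> + \<lceil>q\<^sub>2/2\<rceil> \<le> \<lceil>(q\<^sub>1+q\<^sub>2+1)/2\<rceil>\<close>;
  so \<open>H\<close> is closed under addition. Subtracting \<open>a\<close> or some \<open>2a - t\<close> (\<open>2 \<le> t \<le> n\<close>) from a
  nonzero element always leaves an element of \<open>H\<close>, so \<open>S\<close> generates \<open>H\<close>. Finally
  \<open>a \<equiv> 1 (mod n)\<close>, so the residues mod \<open>n\<close> along a level are consecutive, and every level has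
  \<open>\<lceil>q/2\<rceil> n\<close> elements; hence each window of \<open>n\<close> elements starting at an index \<open>\<equiv> 1 (mod n)\<close> lies in one level
  (or in the tail \<open>[2ka, \<infinity>[\<close>) and runs through \<open>n\<close> consecutive residues.\<close>

lemma bij_betw_shifted_mod: "bij_betw (\<lambda>t. (c + t) mod n) {1..n} {0..<(n::nat)}"
proof (cases "n = 0")
  case False
  have "u = v" if "u \<in> {1..n}" "v \<in> {1..n}" "u \<le> v" "(c + u) mod n = (c + v) mod n" for u v
  proof -
    have "n dvd v - u" using that(3,4) mod_eq_dvd_iff_nat[of "c + u" "c + v" n] by simp
    moreover have "v - u < n" using that(1,2) by auto
    ultimately show "u = v" using that(3) dvd_imp_le by fastforce
  qed
  then have "inj_on (\<lambda>t. (c + t) mod n) {1..n}"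
    unfolding inj_on_def by (metis nat_le_linear)
  moreover have "(\<lambda>t. (c + t) mod n) ` {1..n} \<subseteq> {0..<n}" using False by auto
  ultimately show ?thesis
    by (simp add: bij_betw_def card_image card_subset_eq)
qed simp

lemma enumerate_Suc_eqI:
  fixes S :: "nat set"
  assumes "infinite S" "enumerate S p = z" "y \<in> S" "z < y" "\<And>w. z < w \<Longrightarrow> w < y \<Longrightarrow> w \<notin> S"
  shows "enumerate S (Suc p) = y"
  unfolding enumerate_Suc''[OF assms(1)] assms(2)
  by (rule Least_equality) (use assms(3-5) in \<open>auto simp: not_less[symmetric]\<close>)

lemma enumerate_add_interval:
  fixes S :: "nat set"
  assumes "infinite S" "enumerate S p = z" "{z..z+m} \<subseteq> S" "t \<le> m"
  shows "enumerate S (p + t) = z + t"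
  using assms(4)
proof (induction t)
  case (Suc t)
  have "enumerate S (Suc (p + t)) = Suc (z + t)"
    using Suc assms(3) by (intro enumerate_Suc_eqI[OF assms(1)]) auto
  then show ?case by simp
qed (use assms(2) in simp)

lemma gen_least: "submonoid M \<Longrightarrow> S \<subseteq> M \<Longrightarrow> gen S \<subseteq> M"
  unfolding gen_def by blast

lemma submonoid_gen: "submonoid (gen S)"
  unfolding gen_def submonoid_def by blast

lemma subset_gen_by_descent:
  assumes "\<And>x. x \<in> M \<Longrightarrow> x \<noteq> 0 \<Longrightarrow> \<exists>s\<in>S. 0 < s \<and> s \<le> x \<and> x - s \<in> M"
  shows "M \<subseteq> gen S"
proof
  fix x assume "x \<in> M"
  then show "x \<in> gen S"
  proof (induction x rule: less_induct)
    case (less x)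
    show ?case
    proof (cases "x = 0")
      case True then show ?thesis using submonoid_gen unfolding submonoid_def by simp
    next
      case False
      then obtain s where s: "s \<in> S" "0 < s" "s \<le> x" "x - s \<in> M" using assms less.prems by blast
      then have "s \<in> gen S" "x - s \<in> gen S" using less.IH[of "x - s"] unfolding gen_def by auto
      then have "s + (x - s) \<in> gen S" using submonoid_gen unfolding submonoid_def by blast
      then show ?thesis using s(3) by simp
    qed
  qed
qed

lemma UN_odd_even:
  fixes m :: nat
  shows "(\<Union>i<m. f (2 * i + 1) \<union> f (2 * i + 2)) = (\<Union>q\<in>{1..2 * m}. f q)"
proof (rule set_eqI)
  fix x
  have "(\<exists>i<m. x \<in> f (2 * i + 1) \<or> x \<in> f (2 * i + 2)) \<longleftrightarrow> (\<exists>q\<in>{1..2 * m}. x \<in> f q)"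
  proof
    assume "\<exists>q\<in>{1..2 * m}. x \<in> f q"
    then obtain q where q: "1 \<le> q" "q \<le> 2 * m" "x \<in> f q" by auto
    then have "q = 2 * ((q - 1) div 2) + 1 \<or> q = 2 * ((q - 1) div 2) + 2" "(q - 1) div 2 < m"
      by presburger+
    then show "\<exists>i<m. x \<in> f (2 * i + 1) \<or> x \<in> f (2 * i + 2)"
      using q(3) by metis
  qed auto
  then show "x \<in> (\<Union>i<m. f (2 * i + 1) \<union> f (2 * i + 2)) \<longleftrightarrow> x \<in> (\<Union>q\<in>{1..2 * m}. f q)" by auto
qed

locale block_semigroup =
  fixes n k :: nat
  assumes n_ge_3: "3 \<le> n" and k_ge_1: "1 \<le> k"
begin

definition a :: nat where "a = n * k + 1"

definition S :: "nat set" where "S = {a} \<union> {2 * a - n .. 2 * a - 2}"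

definition width :: "nat \<Rightarrow> nat" where "width q = (q + 1) div 2"

definition digits_in_H :: "nat \<Rightarrow> nat \<Rightarrow> bool" where
  "digits_in_H q r \<longleftrightarrow> 2 * k \<le> q \<or> (1 \<le> q \<and> (r = 0 \<or> a - width q * n \<le> r \<and> r \<le> a - 2))"

definition H :: "nat set" where "H = {x. x = 0 \<or> digits_in_H (x div a) (x mod a)}"

definition block :: "nat \<Rightarrow> nat set" where "block q = {q * a + (a - width q * n) .. q * a + (a - 2)}"

lemma n_lt_a: "n < a"
  using mult_le_mono2[OF k_ge_1, of n] unfolding a_def by linarith

lemma a_ge_4: "4 \<le> a"
  using mult_le_mono[OF n_ge_3 k_ge_1] unfolding a_def by simp

lemma width_le: "q \<le> 2 * k \<Longrightarrow> width q \<le> k"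
  unfolding width_def by simp

lemma width_pos: "1 \<le> q \<Longrightarrow> 1 \<le> width q"
  unfolding width_def by simp

lemma width_mono: "q \<le> q' \<Longrightarrow> width q \<le> width q'"
  unfolding width_def by (simp add: div_le_mono)

lemma width_add_le: "width q1 + width q2 \<le> width (q1 + q2 + 1)"
  unfolding width_def by presburger

lemma a_minus_width: "q \<le> 2 * k \<Longrightarrow> a - width q * n = (k - width q) * n + 1"
proof -
  assume "q \<le> 2 * k"
  then have "width q * n \<le> n * k" using width_le mult_le_mono1 by (metis mult.commute)
  moreover have "(k - width q) * n = n * k - width q * n" by (simp add: diff_mult_distrib mult.commute[of n k])
  ultimately show ?thesis unfolding a_def by linarith
qed

lemma mult_n_lt_a: "j \<le> k \<Longrightarrow> j * n < a"
  using mult_le_mono1[of j k n] mult.commute[of n k] unfolding a_def by linarith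

lemma width_mult_lt_a: "q \<le> 2 * k \<Longrightarrow> width q * n < a"
  using width_le mult_n_lt_a by blast

lemma mem_H_iff: "r < a \<Longrightarrow> q * a + r \<in> H \<longleftrightarrow> q * a + r = 0 \<or> digits_in_H q r"
  unfolding H_def using a_ge_4 by simp

lemma level_decomp: obtains q r where "x = q * a + r" "r < a"
  using a_ge_4 by (metis div_mult_mod_eq mod_less_divisor zero_less_numeral less_le_trans)

lemma zero_mem_H: "0 \<in> H"
  unfolding H_def by simp

lemma mult_a_mem_H: "1 \<le> q \<Longrightarrow> q * a \<in> H"
  using mem_H_iff[of 0 q] a_ge_4 unfolding digits_in_H_def by simp

lemma block_mem_H: assumes "x \<in> block q" "1 \<le> q" "q \<le> 2 * k" shows "x \<in> H"
proof -
  have "x = q * a + (x - q * a)" "a - width q * n \<le> x - q * a" "x - q * a \<le> a - 2"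
    using assms(1) unfolding block_def by auto
  then show "x \<in> H" using mem_H_iff[of "x - q * a" q] assms(2) a_ge_4 unfolding digits_in_H_def by auto
qed

lemma tail_mem_H: "2 * k * a \<le> x \<Longrightarrow> x \<in> H"
  unfolding H_def digits_in_H_def using a_ge_4 by (simp add: less_eq_div_iff_mult_less_eq)

lemma H_eq_levels: "H = {0} \<union> (\<Union>q\<in>{1..2 * k}. insert (q * a) (block q)) \<union> {2 * k * a..}"
proof
  show "H \<subseteq> {0} \<union> (\<Union>q\<in>{1..2 * k}. insert (q * a) (block q)) \<union> {2 * k * a..}"
  proof
    fix x assume "x \<in> H"
    define q r where "q = x div a" and "r = x mod a"
    have x: "x = q * a + r" "r < a" using a_ge_4 unfolding q_def r_def by (simp_all add: div_mult_mod_eq)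
    show "x \<in> {0} \<union> (\<Union>q\<in>{1..2 * k}. insert (q * a) (block q)) \<union> {2 * k * a..}"
    proof (cases "x = 0 \<or> 2 * k \<le> q")
      case True
      moreover have "2 * k \<le> q \<Longrightarrow> 2 * k * a \<le> x" using x(1) mult_le_mono1[of "2 * k" q a] by linarith
      ultimately show ?thesis by auto
    next
      case False
      then have "1 \<le> q" "q < 2 * k" "r = 0 \<or> a - width q * n \<le> r \<and> r \<le> a - 2"
        using \<open>x \<in> H\<close> mem_H_iff[OF x(2)] x(1) unfolding digits_in_H_def by auto
      then have "x \<in> insert (q * a) (block q)" using x unfolding block_def by auto
      then show ?thesis using \<open>1 \<le> q\<close> \<open>q < 2 * k\<close> by auto
    qed
  qed
  show "{0} \<union> (\<Union>q\<in>{1..2 * k}. insert (q * a) (block q)) \<union> {2 * k * a..} \<subseteq> H"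
    using zero_mem_H mult_a_mem_H block_mem_H tail_mem_H by fastforce
qed

lemma Aset_eq_level: "i < k \<Longrightarrow> Aset n k i = insert ((2 * i + 1) * a) (block (2 * i + 1))"
proof -
  assume "i < k"
  then have "width (2 * i + 1) * n < a" by (intro width_mult_lt_a) simp
  moreover have "width (2 * i + 1) = i + 1" unfolding width_def by simp
  moreover have "(2 * i + 2) * a = (2 * i + 1) * a + a" by (simp add: algebra_simps)
  ultimately have "(2 * i + 2) * a - (i + 1) * n = (2 * i + 1) * a + (a - width (2 * i + 1) * n)"
    and "(2 * i + 2) * a - 2 = (2 * i + 1) * a + (a - 2)"
    using a_ge_4 by simp_all
  then show ?thesis unfolding Aset_def Let_def block_def a_def[symmetric] by simp
qed

lemma Bset_eq_level: "i < k \<Longrightarrow> Bset n k i = insert ((2 * i + 2) * a) (block (2 * i + 2))"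
proof -
  assume "i < k"
  then have "width (2 * i + 2) * n < a" by (intro width_mult_lt_a) simp
  moreover have "width (2 * i + 2) = i + 1" unfolding width_def by simp
  moreover have "(2 * i + 3) * a = (2 * i + 2) * a + a" by (simp add: algebra_simps)
  ultimately have "(2 * i + 3) * a - (i + 1) * n = (2 * i + 2) * a + (a - width (2 * i + 2) * n)"
    and "(2 * i + 3) * a - 2 = (2 * i + 2) * a + (a - 2)"
    using a_ge_4 by simp_all
  then show ?thesis unfolding Bset_def Let_def block_def a_def[symmetric] by simp
qed

lemma Hset_eq_H: "Hset n k = H"
proof -
  have "{0..k - 1} = {..<k}" using k_ge_1 by auto
  then have "(\<Union>i\<in>{0..k - 1}. Aset n k i \<union> Bset n k i) = (\<Union>q\<in>{1..2 * k}. insert (q * a) (block q))"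
    using Aset_eq_level Bset_eq_level UN_odd_even[of "\<lambda>q. insert (q * a) (block q)"] by simp
  moreover have "Hset n k = {0} \<union> (\<Union>i\<in>{0..k - 1}. Aset n k i \<union> Bset n k i) \<union> {2 * k * a..}"
    unfolding Hset_def a_def ..
  ultimately show ?thesis unfolding H_eq_levels by simp
qed

lemma digits_in_H_mono: "digits_in_H q r \<Longrightarrow> q \<le> q' \<Longrightarrow> digits_in_H q' r"
  using width_mono[of q q'] mult_le_mono1[of "width q" "width q'" n]
  unfolding digits_in_H_def by (metis diff_le_mono2 le_trans)

lemma block_add_carry:
  assumes "1 \<le> q1" "1 \<le> q2" "q1 + q2 < 2 * k"
    and "r1 \<in> {a - width q1 * n .. a - 2}" "r2 \<in> {a - width q2 * n .. a - 2}"
  shows "q1 * a + r1 + (q2 * a + r2) \<in> H"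
proof -
  let ?q = "q1 + q2 + 1"
  have "width q1 + width q2 \<le> k" using assms(3) unfolding width_def by presburger
  then have "(width q1 + width q2) * n < a" by (rule mult_n_lt_a)
  moreover have "(width q1 + width q2) * n \<le> width ?q * n" using width_add_le by (rule mult_le_mono1)
  ultimately have "q1 * a + r1 + (q2 * a + r2) \<in> block ?q"
    using assms(4,5) a_ge_4 unfolding block_def by (auto simp: algebra_simps)
  then show ?thesis by (rule block_mem_H) (use assms(3) in auto)
qed

lemma add_mem_H: assumes "x \<in> H" "y \<in> H" shows "x + y \<in> H"
proof -
  obtain q1 r1 where x: "x = q1 * a + r1" "r1 < a" using level_decomp .
  obtain q2 r2 where y: "y = q2 * a + r2" "r2 < a" using level_decomp .
  consider "x = 0 \<or> y = 0" | "2 * k \<le> q1 + q2" | "x \<noteq> 0" "y \<noteq> 0" "q1 + q2 < 2 * k" by linarith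
  then show ?thesis
  proof cases
    case 1 then show ?thesis using assms by auto
  next
    case 2
    then have "2 * k * a \<le> x + y" using x y mult_le_mono1[OF 2, of a] by (simp add: algebra_simps)
    then show ?thesis by (rule tail_mem_H)
  next
    case 3
    then have d1: "digits_in_H q1 r1" and d2: "digits_in_H q2 r2"
      using assms x y mem_H_iff by auto
    then have q1: "1 \<le> q1" "r1 = 0 \<or> r1 \<in> {a - width q1 * n .. a - 2}"
      and q2: "1 \<le> q2" "r2 = 0 \<or> r2 \<in> {a - width q2 * n .. a - 2}"
      using 3(3) unfolding digits_in_H_def by auto
    show ?thesis
    proof (cases "r1 = 0 \<or> r2 = 0")
      case True
      then have "x + y = (q1 + q2) * a + (r1 + r2)" "r1 + r2 < a"
        "digits_in_H (q1 + q2) (r1 + r2)"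
        using x y digits_in_H_mono[OF d1, of "q1 + q2"] digits_in_H_mono[OF d2, of "q1 + q2"]
        by (auto simp: algebra_simps)
      then show ?thesis using mem_H_iff by auto
    next
      case False
      then show ?thesis using block_add_carry[of q1 q2 r1 r2] q1 q2 3(3) x y by auto
    qed
  qed
qed

lemma submonoid_H: "submonoid H"
  unfolding submonoid_def using add_mem_H by (auto simp: H_def)

lemma finite_UNIV_minus_H: "finite (UNIV - H)"
proof -
  have "UNIV - H \<subseteq> {..<2 * k * a}" using tail_mem_H by (auto simp: not_less[symmetric])
  then show ?thesis by (rule finite_subset) simp
qed

lemma infinite_H: "infinite H"
  using finite_UNIV_minus_H by (metis Diff_infinite_finite infinite_UNIV_nat finite_Diff2)

lemma numerical_semigroup_H: "numerical_semigroup H"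
  unfolding numerical_semigroup_def using submonoid_H finite_UNIV_minus_H by simp

lemma width_1: "width 1 = 1"
  unfolding width_def by simp

lemma S_eq: "S = insert a (block 1)"
  using n_lt_a unfolding S_def block_def width_1 by auto

lemma S_subset_H: "S \<subseteq> H"
  using S_eq mult_a_mem_H[of 1] block_mem_H[of _ 1] k_ge_1 by auto

lemma S_pos: "s \<in> S \<Longrightarrow> 0 < s"
  unfolding S_def using n_lt_a a_ge_4 by auto

lemma mem_H_above_last_gap: "(2 * k - 1) * a \<le> y \<Longrightarrow> y \<noteq> 2 * k * a - 1 \<Longrightarrow> y \<in> H"
proof -
  assume y: "(2 * k - 1) * a \<le> y" "y \<noteq> 2 * k * a - 1"
  have km: "(2 * k - 1) * a + a = 2 * k * a" using k_ge_1 by (simp add: algebra_simps)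
  have "width (2 * k - 1) * n = a - 1" using k_ge_1 unfolding width_def a_def by simp
  then have "block (2 * k - 1) = {(2 * k - 1) * a + 1 .. (2 * k - 1) * a + (a - 2)}"
    unfolding block_def using a_ge_4 by simp
  then have "y \<in> insert ((2 * k - 1) * a) (block (2 * k - 1)) \<or> 2 * k * a \<le> y"
    using y km by auto
  moreover have "1 \<le> 2 * k - 1" using k_ge_1 by simp
  ultimately show "y \<in> H"
    using mult_a_mem_H block_mem_H[of y "2 * k - 1"] tail_mem_H by auto
qed

lemma descent_tail: "2 * k * a \<le> x \<Longrightarrow> \<exists>s\<in>S. s \<le> x \<and> x - s \<in> H"
proof -
  assume x: "2 * k * a \<le> x"
  have km: "(2 * k - 1) * a + a = 2 * k * a" using k_ge_1 by (simp add: algebra_simps)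
  show ?thesis
  proof (cases "x = 2 * k * a + a - 1")
    case True
    have "x - (2 * a - 2) = (2 * k - 1) * a + 1" using True km a_ge_4 by linarith
    then have "x - (2 * a - 2) \<in> H" using a_ge_4 km by (intro mem_H_above_last_gap) linarith+
    moreover have "2 * a - 2 \<in> S" unfolding S_def using n_ge_3 by (simp add: diff_le_mono2)
    ultimately show ?thesis using True km a_ge_4 by (intro bexI[of _ "2 * a - 2"]) auto
  next
    case False
    then have "x - a \<in> H" using x km by (intro mem_H_above_last_gap) linarith+
    moreover have "a \<in> S" unfolding S_def by simp
    ultimately show ?thesis using x km by (intro bexI[of _ a]) auto
  qed
qed

text \<open>Here \<open>x - a\<close> would fall into the gap after \<open>2i a\<close>; subtracting \<open>2a - t\<close> instead lands
  in the block of level \<open>2i - 1\<close>.\<close>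

lemma descent_odd_level:
  assumes "1 \<le> i" "2 * i + 1 < 2 * k" "a - (i + 1) * n \<le> r" "r < a - i * n"
  shows "\<exists>s\<in>S. s \<le> (2 * i + 1) * a + r \<and> (2 * i + 1) * a + r - s \<in> H"
proof -
  define t where "t = max 2 (a - i * n - r)"
  have ni: "n \<le> i * n" using assms(1) by (metis mult_1 mult_le_mono1)
  moreover have "(i + 1) * n = i * n + n" by simp
  moreover have "(i + 1) * n < a" using assms(2) by (intro mult_n_lt_a) simp
  ultimately have "a - i * n - r \<le> n" "r + 2 \<le> a - 2"
    using assms(3,4) n_ge_3 by linarith+
  then have t: "2 \<le> t" "t \<le> n" using n_ge_3 unfolding t_def by auto
  have "a - i * n - r \<le> t" "t = 2 \<or> t = a - i * n - r" unfolding t_def by auto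
  then have rt: "a - i * n \<le> r + t" "r + t \<le> a - 2"
    using \<open>r + 2 \<le> a - 2\<close> ni n_ge_3 assms(4) by linarith+
  have "width (2 * i - 1) = i" using assms(1) unfolding width_def by simp
  then have "(2 * i - 1) * a + (r + t) \<in> block (2 * i - 1)" using rt unfolding block_def by simp
  then have "(2 * i - 1) * a + (r + t) \<in> H" by (rule block_mem_H) (use assms in auto)
  moreover have "(2 * i + 1) * a = (2 * i - 1) * a + 2 * a" using assms(1) by (simp add: algebra_simps)
  moreover have "2 * a - t \<in> S" unfolding S_def using t by auto
  ultimately show ?thesis using t n_lt_a by (intro bexI[of _ "2 * a - t"]) auto
qed

lemma descent_below_tail:
  assumes "1 \<le> q" "q < 2 * k" "r = 0 \<or> r \<in> {a - width q * n .. a - 2}"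
  shows "\<exists>s\<in>S. s \<le> q * a + r \<and> q * a + r - s \<in> H"
proof -
  have aS: "a \<in> S" unfolding S_def by simp
  have qa: "q * a = (q - 1) * a + a" using assms(1) by (simp add: algebra_simps)
  consider "r = 0" | "q = 1" | "2 \<le> q" "r \<in> {a - width (q - 1) * n .. a - 2}"
    | "2 \<le> q" "r \<in> {a - width q * n ..< a - width (q - 1) * n}"
    using assms(1,3) by (cases "q = 1"; cases "a - width (q - 1) * n \<le> r") auto
  then show ?thesis
  proof cases
    case 1
    have "(q - 1) * a \<in> H" using mult_a_mem_H[of "q - 1"] zero_mem_H assms(1) by (cases "q = 1") auto
    then show ?thesis using aS qa 1 by (intro bexI[of _ a]) auto
  next
    case 2
    then have "q * a + r \<in> S" using assms(3) S_eq block_def width_1 by auto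
    then show ?thesis using zero_mem_H by (intro bexI[of _ "q * a + r"]) auto
  next
    case 3
    then have "(q - 1) * a + r \<in> block (q - 1)" unfolding block_def by simp
    then have "(q - 1) * a + r \<in> H" by (rule block_mem_H) (use 3(1) assms(2) in auto)
    then show ?thesis using aS qa by (intro bexI[of _ a]) auto
  next
    case 4
    then have "width (q - 1) * n < width q * n" by (simp only: atLeastLessThan_iff) linarith
    then have "width (q - 1) < width q" by simp
    define i where "i = q div 2"
    have q: "q = 2 * i + 1" using \<open>width (q - 1) < width q\<close> unfolding width_def i_def by presburger
    then have "width q = i + 1" "width (q - 1) = i" unfolding width_def by simp_all
    then have "\<exists>s\<in>S. s \<le> (2 * i + 1) * a + r \<and> (2 * i + 1) * a + r - s \<in> H"
      using 4 assms(2) q by (intro descent_odd_level) auto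
    then show ?thesis by (simp only: q)
  qed
qed

lemma descent_step: "x \<in> H \<Longrightarrow> x \<noteq> 0 \<Longrightarrow> \<exists>s\<in>S. 0 < s \<and> s \<le> x \<and> x - s \<in> H"
proof -
  assume "x \<in> H" "x \<noteq> 0"
  obtain q r where x: "x = q * a + r" "r < a" using level_decomp .
  then have "digits_in_H q r" using \<open>x \<in> H\<close> \<open>x \<noteq> 0\<close> mem_H_iff by auto
  then have "\<exists>s\<in>S. s \<le> x \<and> x - s \<in> H"
  proof (cases "2 * k \<le> q")
    case True
    then have "2 * k * a \<le> x" using x mult_le_mono1[OF True, of a] by linarith
    then show ?thesis by (rule descent_tail)
  next
    case False
    then show ?thesis using descent_below_tail[of q r] x \<open>digits_in_H q r\<close> unfolding digits_in_H_def by auto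
  qed
  then show ?thesis using S_pos by blast
qed

lemma gen_S_eq_H: "gen S = H"
  using gen_least[OF submonoid_H S_subset_H] subset_gen_by_descent[OF descent_step] by blast

lemma mult_a_add_mod_n: "(q * a + r) mod n = (q + r) mod n"
proof -
  have "q * a + r = (q + r) + (q * k) * n" unfolding a_def by (simp add: algebra_simps)
  then show ?thesis by (simp only: mod_mult_self1)
qed

lemma gap_not_mem_H:
  assumes "q < 2 * k" "0 < r" "r < a - width q * n \<or> r = a - 1"
  shows "q * a + r \<notin> H"
proof -
  have "r < a" using assms(3) a_ge_4 by auto
  then show ?thesis using assms mem_H_iff unfolding digits_in_H_def by auto
qed

lemma enumerate_H_0: "enumerate H 0 = 0"
  unfolding enumerate_0 using zero_mem_H by (simp add: Least_eq_0)

lemma enumerate_after_gap: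
  assumes z: "enumerate H p = z" and J: "1 \<le> J" "J \<le> 2 * k" "z < J * a"
    and gap: "\<And>w. z < w \<Longrightarrow> w < J * a \<Longrightarrow> w \<notin> H"
  shows "enumerate H (Suc p) = J * a"
    and "2 \<le> t \<Longrightarrow> t \<le> n \<Longrightarrow> enumerate H (p + t) = J * a + (a - width J * n) + (t - 2)"
proof -
  show first: "enumerate H (Suc p) = J * a"
    by (rule enumerate_Suc_eqI[OF infinite_H z]) (use mult_a_mem_H J gap in auto)
  let ?b = "J * a + (a - width J * n)"
  have lo: "a - width J * n = (k - width J) * n + 1" using J(2) by (rule a_minus_width)
  have "n \<le> width J * n" using width_pos[OF J(1)] by (metis mult_1 mult_le_mono1)
  then have "?b + (n - 2) \<le> J * a + (a - 2)" using width_mult_lt_a[OF J(2)] n_ge_3 by linarith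
  then have block: "{?b .. ?b + (n - 2)} \<subseteq> block J" unfolding block_def by auto
  have "w \<notin> H" if "J * a < w" "w < ?b" for w
  proof -
    have "J < 2 * k"
    proof (rule ccontr)
      assume "\<not> J < 2 * k"
      then have "width J = k" using J(2) unfolding width_def by simp
      then show False using that lo by simp
    qed
    then have "J * a + (w - J * a) \<notin> H" using that by (intro gap_not_mem_H) auto
    then show ?thesis using that by simp
  qed
  moreover have "?b \<in> H" using block J by (intro block_mem_H[of _ J]) auto
  ultimately have second: "enumerate H (Suc (Suc p)) = ?b"
    using lo by (intro enumerate_Suc_eqI[OF infinite_H first]) auto
  assume t: "2 \<le> t" "t \<le> n"
  have "{?b .. ?b + (n - 2)} \<subseteq> H" using block block_mem_H J by blast
  then have "enumerate H (Suc (Suc p) + (t - 2)) = ?b + (t - 2)"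
    by (rule enumerate_add_interval[OF infinite_H second]) (use t in simp)
  moreover have "Suc (Suc p) + (t - 2) = p + t" using t by simp
  ultimately show "enumerate H (p + t) = ?b + (t - 2)" by metis
qed

text \<open>The possible values of \<open>enumerate H (m * n)\<close>: \<open>0\<close>, and the numbers \<open>j a + u n - 1\<close> that close a
  run of \<open>n\<close> elements inside level \<open>j\<close> (for \<open>j = 2k\<close>, inside the tail).\<close>

definition window_end :: "nat \<Rightarrow> bool" where
  "window_end z \<longleftrightarrow> z = 0 \<or>
     (\<exists>j u. 1 \<le> j \<and> j \<le> 2 * k \<and> k < u + width j \<and> (u \<le> k \<or> j = 2 * k) \<and> z + 1 = j * a + u * n)"

lemma window_step_jump:
  assumes "enumerate H p = z" "1 \<le> J" "J \<le> 2 * k" "z < J * a" "\<And>w. z < w \<Longrightarrow> w < J * a \<Longrightarrow> w \<notin> H"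
  shows "(\<forall>t\<in>{1..n}. enumerate H (p + t) mod n = (J - 1 + t) mod n) \<and> window_end (enumerate H (p + n))"
proof -
  have lo: "a - width J * n = (k - width J) * n + 1" using assms(3) by (rule a_minus_width)
  have res: "enumerate H (p + t) mod n = (J - 1 + t) mod n" if t: "1 \<le> t" "t \<le> n" for t
  proof (cases "t = 1")
    case True
    then show ?thesis using enumerate_after_gap(1)[OF assms] mult_a_add_mod_n[of J 0] assms(2) by simp
  next
    case False
    then have "enumerate H (p + t) = J * a + ((k - width J) * n + (t - 1))"
      using enumerate_after_gap(2)[OF assms, of t] t lo by simp
    moreover have "J + ((k - width J) * n + (t - 1)) = (J - 1 + t) + (k - width J) * n"
      using assms(2) t by simp
    ultimately show ?thesis using mult_a_add_mod_n by (metis mod_mult_self1)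
  qed
  have "enumerate H (p + n) + 1 = J * a + (k - width J + 1) * n"
    using enumerate_after_gap(2)[OF assms, of n] n_ge_3 lo by (simp add: algebra_simps)
  moreover have "1 \<le> width J" "width J \<le> k" using assms(2,3) width_pos width_le by auto
  ultimately have "window_end (enumerate H (p + n))"
    unfolding window_end_def using assms(2,3) by (intro disjI2 exI[of _ J] exI[of _ "k - width J + 1"]) auto
  then show ?thesis using res by auto
qed

lemma window_step_consecutive:
  assumes "enumerate H p = z" "{z .. z + n} \<subseteq> H" "window_end (z + n)"
  shows "(\<forall>t\<in>{1..n}. enumerate H (p + t) mod n = (z + t) mod n) \<and> window_end (enumerate H (p + n))"
  using enumerate_add_interval[OF infinite_H assms(1,2)] assms(3) by auto

lemma run_subset_H:
  assumes "1 \<le> j" "j \<le> 2 * k" "k < u + width j" "u < k \<or> j = 2 * k" "z + 1 = j * a + u * n"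
  shows "{z .. z + n} \<subseteq> H"
proof (cases "j = 2 * k")
  case True
  then have "1 \<le> u" using assms(3) unfolding width_def by simp
  moreover have "z + 1 = 2 * k * a + u * n" using assms(5) True by simp
  ultimately have "2 * k * a \<le> z" using n_ge_3 mult_le_mono1[of 1 u n] by linarith
  then show ?thesis using tail_mem_H by auto
next
  case False
  then have "k - width j + 1 \<le> u" "u + 1 \<le> k" using assms(2,3,4) width_le[of j] by auto
  then have "(k - width j) * n + n \<le> u * n" "u * n + n \<le> k * n"
    using mult_le_mono1 by (metis add_mult_distrib mult_1)+
  moreover have "a - width j * n = (k - width j) * n + 1" using assms(2) by (rule a_minus_width)
  moreover have "k * n + 1 = a" unfolding a_def by simp
  ultimately have "{z .. z + n} \<subseteq> block j" unfolding block_def using assms(5) n_ge_3 by auto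
  then show ?thesis using block_mem_H assms(1,2) by blast
qed

lemma window_step:
  assumes "window_end (enumerate H p)"
  shows "\<exists>c. (\<forall>t\<in>{1..n}. enumerate H (p + t) mod n = (c + t) mod n) \<and> window_end (enumerate H (p + n))"
proof -
  define z where "z = enumerate H p"
  consider "z = 0"
    | j u where "1 \<le> j" "j \<le> 2 * k" "k < u + width j" "u < k \<or> j = 2 * k" "z + 1 = j * a + u * n"
    | j where "1 \<le> j" "j < 2 * k" "z + 1 = j * a + k * n"
    using assms unfolding window_end_def z_def by (metis le_neq_implies_less)
  then show ?thesis
  proof cases
    case 1
    have "w \<notin> H" if "0 < w" "w < 1 * a" for w
      using gap_not_mem_H[of 0 w] k_ge_1 that unfolding width_def by simp
    then have "(\<forall>t\<in>{1..n}. enumerate H (p + t) mod n = (1 - 1 + t) mod n) \<and> window_end (enumerate H (p + n))"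
      using 1 k_ge_1 a_ge_4 z_def by (intro window_step_jump) auto
    then show ?thesis by (rule exI)
  next
    case (2 j u)
    have "window_end (z + n)"
      unfolding window_end_def using 2 by (intro disjI2 exI[of _ j] exI[of _ "u + 1"]) auto
    moreover have "{z .. z + n} \<subseteq> H" using 2 by (rule run_subset_H)
    ultimately show ?thesis using window_step_consecutive z_def by blast
  next
    case (3 j)
    have "k * n + 1 = a" unfolding a_def by simp
    then have z: "z = j * a + (a - 2)" using 3(3) a_ge_4 by linarith
    have "w \<notin> H" if "z < w" "w < (j + 1) * a" for w
    proof -
      have "w = j * a + (a - 1)" using that z a_ge_4 by simp
      then show ?thesis using gap_not_mem_H[of j "a - 1"] 3(2) a_ge_4 by simp
    qed
    then have "(\<forall>t\<in>{1..n}. enumerate H (p + t) mod n = (j + 1 - 1 + t) mod n) \<and> window_end (enumerate H (p + n))"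
      using 3 z z_def a_ge_4 by (intro window_step_jump) auto
    then show ?thesis by (rule exI)
  qed
qed

lemma window_end_enumerate: "window_end (enumerate H (m * n))"
proof (induction m)
  case 0
  then show ?case unfolding window_end_def using enumerate_H_0 by simp
next
  case (Suc m)
  have "window_end (enumerate H (m * n + n))" using window_step[OF Suc.IH] by blast
  moreover have "Suc m * n = m * n + n" by simp
  ultimately show ?case by metis
qed

lemma enumerate_mod_bij: "bij_betw (\<lambda>j. enumerate H (m * n + j) mod n) {1..n} {0..<n}"
proof -
  obtain c where c: "\<forall>t\<in>{1..n}. enumerate H (m * n + t) mod n = (c + t) mod n"
    using window_step[OF window_end_enumerate] by blast
  have "bij_betw (\<lambda>t. (c + t) mod n) {1..n} {0..<n}" by (rule bij_betw_shifted_mod)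
  moreover have "bij_betw (\<lambda>j. enumerate H (m * n + j) mod n) {1..n} {0..<n} = bij_betw (\<lambda>t. (c + t) mod n) {1..n} {0..<n}"
    using c by (intro bij_betw_cong) blast
  ultimately show ?thesis by simp
qed

lemma enumerate_first_window: "enumerate H ` {1..n} = S"
proof -
  have gap: "w \<notin> H" if "0 < w" "w < 1 * a" for w
    using gap_not_mem_H[of 0 w] k_ge_1 that unfolding width_def by simp
  note e = enumerate_after_gap[of 0 0 1, OF enumerate_H_0 _ _ _ gap, simplified]
  have "{1..n} = insert 1 {2..n}" using n_ge_3 by auto
  then have "enumerate H ` {1..n} = insert (enumerate H 1) (enumerate H ` {2..n})" by simp
  also have "enumerate H ` {2..n} = (\<lambda>t. a + (a - n) + (t - 2)) ` {2..n}"
    using e k_ge_1 a_ge_4 width_1 by (intro image_cong) auto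
  also have "\<dots> = block 1"
  proof
    show "(\<lambda>t. a + (a - n) + (t - 2)) ` {2..n} \<subseteq> block 1"
      unfolding block_def width_1 using n_lt_a by auto
    show "block 1 \<subseteq> (\<lambda>t. a + (a - n) + (t - 2)) ` {2..n}"
    proof
      fix x assume "x \<in> block 1"
      then show "x \<in> (\<lambda>t. a + (a - n) + (t - 2)) ` {2..n}"
        unfolding block_def width_1 using n_lt_a
        by (intro image_eqI[of _ _ "x - (a + (a - n)) + 2"]) auto
    qed
  qed
  finally show ?thesis using e k_ge_1 a_ge_4 S_eq by simp
qed

lemma n_permutation_ns_H: "n_permutation_ns n H"
  unfolding n_permutation_ns_def
  using numerical_semigroup_H enumerate_first_window gen_S_eq_H enumerate_mod_bij by simp

end

theorem lemma5p2:
  fixes n k :: nat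
  assumes "n \<ge> 3" and "k \<ge> 1"
  defines "a \<equiv> n * k + 1"
  defines "S \<equiv> {a} \<union> {2 * a - n .. 2 * a - 2}"
  shows "numerical_semigroup (Hset n k) \<and> gen S = Hset n k \<and> n_permutation_ns n (Hset n k)"
proof -
  have L: "block_semigroup n k" using assms(1,2) by unfold_locales
  have "S = block_semigroup.S n k"
    unfolding S_def a_def block_semigroup.S_def[OF L] block_semigroup.a_def[OF L] ..
  then show ?thesis
    using block_semigroup.Hset_eq_H[OF L] block_semigroup.numerical_semigroup_H[OF L]
      block_semigroup.gen_S_eq_H[OF L] block_semigroup.n_permutation_ns_H[OF L]
    by simp
qed

end
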